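(* Let $k\geq 0$ be an integer and $M_{k}(n)=\frac{1+(-1)^{k}k!(n-k-1)!}{n}$ for $n\ge k+1$, $M^+_k(n)=(-1)^kM_k(n)$. For $0<\lvert x\rvert<1$, \[ \sum_{n=0}^{\infty}M_{k}(n+k+1)\frac{x^{n}}{n!}=(-1)^{k}\left(k!\,\Phi(x,1,k+1)-\frac{\gamma(k+1,-x)}{x^{k+1}}\right), \] and \[ \sum_{n=0}^{\infty}M^{+}_{k}(n+k+1)\frac{x^{n}}{n!}=k!\,\Phi(x,1,k+1)-\frac{\gamma(k+1,-x)}{x^{k+1}}. \]
   Context: $\Phi(x,s,a)=\sum_{n=0}^{\infty}\frac{x^{n}}{(n+a)^{s}}$ is the Lerch transcendent, and $\gamma(a,z)=z^{a}\sum_{n=0}^{\infty}\frac{(-z)^{n}}{n!(n+a)}$ is the lower incomplete gamma function. *)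

theory Defs
  imports Complex_Main
begin

definition lerch_phi :: "real \<Rightarrow> real \<Rightarrow> real \<Rightarrow> real" where
  "lerch_phi x s a = (\<Sum>n. x ^ n / (real n + a) powr s)"

text \<open>Lower incomplete gamma function gamma(a,z) = z^a sum_{n>=0} (-z)^n/(n! (n+a)),
  for a positive integer parameter a (the only case needed).\<close>
definition lower_gamma :: "nat \<Rightarrow> real \<Rightarrow> real" where
  "lower_gamma a z = z ^ a * (\<Sum>n. (- z) ^ n / (fact n * (real n + real a)))"

text \<open>M_k(n) = (1 + (-1)^k k! (n-k-1)!)/n, meaningful for n >= k+1.\<close>
definition M :: "nat \<Rightarrow> nat \<Rightarrow> real" where
  "M k n = (1 + (-1) ^ k * fact k * fact (n - k - 1)) / real n"

definition Mplus :: "nat \<Rightarrow> nat \<Rightarrow> real" where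
  "Mplus k n = (-1) ^ k * M k n"

end

theory Submission
  imports Defs
begin

text \<open>The factor \<open>n!\<close> in the numerator of \<open>M\<^sub>k(n+k+1)\<close> cancels the \<open>n!\<close> of the
  exponential weight, so the series splits into \<open>\<Sum> x\<^sup>n / (n!(n+k+1))\<close>, which is the
  incomplete gamma series \<open>\<gamma>(k+1,-x)/(-x)\<^sup>k\<^sup>+\<^sup>1\<close>, plus \<open>(-1)\<^sup>k k!\<close> times the Lerch
  series \<open>\<Sum> x\<^sup>n / (n+k+1) = \<Phi>(x,1,k+1)\<close>.\<close>

lemma lerch_phi_1_sums:
  fixes x a :: real
  assumes "\<bar>x\<bar> < 1" and "0 < a"
  shows "(\<lambda>n. x ^ n / (real n + a)) sums lerch_phi x 1 a"
proof -
  have "summable (\<lambda>n. x ^ n / (real n + a))"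
  proof (rule summable_comparison_test'[of "\<lambda>n. \<bar>x\<bar> ^ n" 1])
    show "summable (\<lambda>n. \<bar>x\<bar> ^ n)"
      using assms by (intro summable_geometric) auto
    show "norm (x ^ n / (real n + a)) \<le> \<bar>x\<bar> ^ n" if "1 \<le> n" for n
      using that assms by (simp add: abs_divide power_abs divide_le_eq mult_le_cancel_left1)
  qed
  moreover have "lerch_phi x 1 a = (\<Sum>n. x ^ n / (real n + a))"
    using assms by (simp add: lerch_phi_def)
  ultimately show ?thesis
    by (simp add: summable_sums)
qed

lemma summable_lower_gamma_series:
  fixes z :: real
  shows "summable (\<lambda>n. (- z) ^ n / (fact n * (real n + real a)))"
proof (rule summable_comparison_test'[of "\<lambda>n. inverse (fact n) * \<bar>z\<bar> ^ n" 1])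
  show "summable (\<lambda>n. inverse (fact n) * \<bar>z\<bar> ^ n)"
    by (rule summable_exp)
  show "norm ((- z) ^ n / (fact n * (real n + real a))) \<le> inverse (fact n) * \<bar>z\<bar> ^ n"
    if "1 \<le> n" for n
  proof -
    have "norm ((- z) ^ n / (fact n * (real n + real a))) = \<bar>z\<bar> ^ n / fact n / (real n + real a)"
      by (simp add: abs_divide abs_mult power_abs)
    also have "\<dots> \<le> \<bar>z\<bar> ^ n / fact n"
      using that by (simp add: divide_le_eq mult_le_cancel_left1)
    finally show ?thesis
      by (simp add: field_simps)
  qed
qed

lemma lower_gamma_div_power_sums:
  fixes z :: real
  assumes "z \<noteq> 0"
  shows "(\<lambda>n. (- z) ^ n / (fact n * (real n + real a))) sums (lower_gamma a z / z ^ a)"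
  using summable_sums[OF summable_lower_gamma_series[of z a]] assms
  by (simp add: lower_gamma_def)

lemma M_shift_term_split:
  "M k (n + k + 1) * x ^ n / fact n
     = x ^ n / (fact n * (real n + real k + 1)) + (-1) ^ k * fact k * (x ^ n / (real n + real k + 1))"
proof -
  have split: "(1 + c * f) / d * y / f = y / (f * d) + c * (y / d)"
    if "f \<noteq> 0" "d \<noteq> 0" for c d f y :: real
    using that by (simp add: field_simps)
  have "M k (n + k + 1) = (1 + (-1) ^ k * fact k * fact n) / (real n + real k + 1)"
    by (simp add: M_def)
  then show ?thesis
    using split[of "fact n" "real n + real k + 1" "(-1) ^ k * fact k" "x ^ n"] by simp
qed

theorem mainTheorem13:
  fixes k :: nat and x :: real
  assumes "0 < \<bar>x\<bar>" and "\<bar>x\<bar> < 1"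
  shows "(\<lambda>n. M k (n + k + 1) * x ^ n / fact n) sums
           ((-1) ^ k * (fact k * lerch_phi x 1 (real k + 1)
              - lower_gamma (k + 1) (- x) / x ^ (k + 1)))
       \<and> (\<lambda>n. Mplus k (n + k + 1) * x ^ n / fact n) sums
           (fact k * lerch_phi x 1 (real k + 1)
              - lower_gamma (k + 1) (- x) / x ^ (k + 1))"
proof -
  let ?S = "fact k * lerch_phi x 1 (real k + 1) - lower_gamma (k + 1) (- x) / x ^ (k + 1)"
  have "x \<noteq> 0"
    using assms by auto
  have "lower_gamma (k + 1) (- x) / (- x) ^ (k + 1)
          = (-1) ^ k * - (lower_gamma (k + 1) (- x) / x ^ (k + 1))"
    by (simp add: power_minus[of x] divide_simps)
  then have gamma: "(\<lambda>n. x ^ n / (fact n * (real n + real k + 1)))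
                 sums ((-1) ^ k * - (lower_gamma (k + 1) (- x) / x ^ (k + 1)))"
    using lower_gamma_div_power_sums[of "- x" "k + 1"] \<open>x \<noteq> 0\<close>
    by (simp add: ac_simps)
  have lerch: "(\<lambda>n. (-1) ^ k * fact k * (x ^ n / (real n + real k + 1)))
                 sums ((-1) ^ k * fact k * lerch_phi x 1 (real k + 1))"
    using sums_mult[OF lerch_phi_1_sums[of x "real k + 1"]] assms
    by (simp add: add.assoc)
  have M_sums: "(\<lambda>n. M k (n + k + 1) * x ^ n / fact n) sums ((-1) ^ k * ?S)"
    unfolding M_shift_term_split using sums_add[OF gamma lerch]
    by (simp add: algebra_simps)
  have "(\<lambda>n. (-1) ^ k * (M k (n + k + 1) * x ^ n / fact n)) sums ((-1) ^ k * ((-1) ^ k * ?S))"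
    by (rule sums_mult[OF M_sums])
  then have "(\<lambda>n. Mplus k (n + k + 1) * x ^ n / fact n) sums ?S"
    by (simp add: Mplus_def mult.assoc[symmetric] flip: power_add)
  with M_sums show ?thesis
    by blast
qed

end
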